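(* The urn process is reversible in time: $(U_0,U_1,\dots,U_n)$ and $(U_n,U_{n-1},\dots,U_0)$ are equal in distribution.
   Context: Urn process: let $n\ge2$. An urn initially contains $n$ black balls. It is emptied in $n$ steps: in each of the first $n-1$ steps a uniformly random pair of balls is removed from the urn and replaced by one red ball; in step $n$ the last remaining ball is removed. $U_k$ is the number of red balls in the urn after $k$ steps, $0\le k\le n$. Equivalently, $(U_k)$ is the Markov chain with $U_0=0$ and $\mathbf P(U_{k+1}=u-1\mid U_k=u)=\binom u2/\binom{n-k}2$, $\mathbf P(U_{k+1}=u\mid U_k=u)=u(n-k-u)/\binom{n-k}2$, $\mathbf P(U_{k+1}=u+1\mid U_k=u)=\binom{n-k-u}2/\binom{n-k}2$ (for $k\le n-2$), and $U_n=0$. *)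

theory Defs
  imports Complex_Main
begin

text \<open>Transition probability of the urn chain from step k (state u) to step k+1 (state v),
  for an urn that initially contains n black balls.\<close>
definition urn_trans :: "nat \<Rightarrow> nat \<Rightarrow> nat \<Rightarrow> nat \<Rightarrow> real" where
  "urn_trans n k u v =
     (if k + 2 \<le> n then
        (if 1 \<le> u \<and> v = u - 1 then real (u choose 2) / real ((n - k) choose 2)
         else if v = u then real (u * (n - k - u)) / real ((n - k) choose 2)
         else if v = u + 1 then real ((n - k - u) choose 2) / real ((n - k) choose 2)
         else 0)
      else (if v = 0 then 1 else 0))"

definition urn_path_prob :: "nat \<Rightarrow> nat list \<Rightarrow> real" where
  "urn_path_prob n us =
     (if length us = n + 1 \<and> us ! 0 = 0
      then (\<Prod>k<n. urn_trans n k (us ! k) (us ! Suc k))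
      else 0)"

end

theory Submission
  imports Defs
begin

(* The path law is a product of one-step transition probabilities; the reversed path
   has the law of the product of the "time-reversed" transitions
   urn_trans n (n-1-k) (U_(k+1)) (U_k).  Both products agree by a detailed balance
   argument: there is a positive weight w(k,u) (equal to 1 at times 0 and n) with
       w(k,u) * P_k(u,v) = w(k+1,v) * P_(n-1-k)(v,u)
   for all states u, v reachable at times k, k+1, and then the weights telescope. *)

lemma fact_choose_two:
  fixes x :: nat
  assumes "2 \<le> x"
  shows "2 * (x choose 2) * fact (x - 2) = fact x"
  using binomial_fact_lemma[OF assms] by (simp add: mult_ac)

lemma prod_detailed_balance:
  fixes h p q :: "nat \<Rightarrow> 'a :: field"
  assumes balance: "\<And>k. k < n \<Longrightarrow> h k * p k = h (Suc k) * q k"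
    and ends: "h n = h 0" and nonzero: "\<And>k. k \<le> n \<Longrightarrow> h k \<noteq> 0"
  shows "(\<Prod>k<n. p k) = (\<Prod>k<n. q k)"
proof -
  have "h 0 * (\<Prod>k<n. h (Suc k)) = (\<Prod>k<n. h k) * h n"
    using prod.lessThan_Suc_shift[of h n] prod.lessThan_Suc[of h n] by simp
  then have shift: "(\<Prod>k<n. h (Suc k)) = (\<Prod>k<n. h k)"
    using ends nonzero[of 0] by simp
  have "(\<Prod>k<n. h k) * (\<Prod>k<n. p k) = (\<Prod>k<n. h (Suc k)) * (\<Prod>k<n. q k)"
    using balance by (simp add: prod.distrib[symmetric])
  moreover have "(\<Prod>k<n. h k) \<noteq> 0"
    using nonzero by simp
  ultimately show ?thesis unfolding shift by simp
qed

(* Numerator of a transition with m balls in the urn, u of them red: removing two red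
   balls (u -> u-1), one of each colour (u -> u), or two black balls (u -> u+1). *)
definition urn_num :: "nat \<Rightarrow> nat \<Rightarrow> nat \<Rightarrow> nat" where
  "urn_num m u v =
     (if 1 \<le> u \<and> v = u - 1 then u choose 2
      else if v = u then u * (m - u)
      else if v = u + 1 then (m - u) choose 2
      else 0)"

lemma urn_num_up [simp]: "urn_num m u (Suc u) = (m - u) choose 2"
  unfolding urn_num_def by auto

lemma urn_num_stay [simp]: "urn_num m u u = u * (m - u)"
  unfolding urn_num_def by auto

lemma urn_num_down [simp]: "urn_num m (Suc v) v = Suc v choose 2"
  unfolding urn_num_def by auto

lemma urn_num_other: "v \<noteq> u + 1 \<Longrightarrow> v \<noteq> u \<Longrightarrow> u \<noteq> v + 1 \<Longrightarrow> urn_num m u v = 0"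
  unfolding urn_num_def by auto

lemma urn_trans_middle:
  assumes "k + 2 \<le> n"
  shows "urn_trans n k u v = real (urn_num (n - k) u v) / real ((n - k) choose 2)"
  using assms unfolding urn_trans_def urn_num_def by simp

lemma urn_trans_last:
  assumes "n \<le> k + 1"
  shows "urn_trans n k u v = (if v = 0 then 1 else 0)"
  using assms unfolding urn_trans_def by simp

definition urn_state_weight :: "nat \<Rightarrow> nat \<Rightarrow> nat \<Rightarrow> nat" where
  "urn_state_weight n k u = fact (u - 1) * fact u * fact (k - u) * fact (n - k - u)"

definition urn_time_weight :: "nat \<Rightarrow> nat \<Rightarrow> nat" where
  "urn_time_weight n k = fact (k - 1) * fact k * fact (n - k) * fact (n - k - 1)"

(* Detailed balance for the time part: it absorbs the denominators C(n-k,2) and C(k+1,2). *)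
lemma urn_time_balance:
  assumes "1 \<le> k" "k + 2 \<le> n"
  shows "urn_time_weight n k * ((k + 1) choose 2) = urn_time_weight n (k + 1) * ((n - k) choose 2)"
proof -
  have lo: "2 * ((k + 1) choose 2) * fact (k - 1) = fact (k + 1)"
    using fact_choose_two[of "k + 1"] assms by simp
  have hi: "2 * ((n - k) choose 2) * fact (n - k - 2) = fact (n - k)"
    using fact_choose_two[of "n - k"] assms by simp
  have "2 * (urn_time_weight n k * ((k + 1) choose 2))
        = fact (k + 1) * fact k * fact (n - k) * fact (n - k - 1)"
    unfolding urn_time_weight_def lo[symmetric] by (simp add: mult_ac)
  also have "\<dots> = 2 * (urn_time_weight n (k + 1) * ((n - k) choose 2))"
    unfolding urn_time_weight_def hi[symmetric] by (simp add: mult_ac diff_diff_add)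
  finally show ?thesis by simp
qed

(* Detailed balance for the state part: moving u -> v forward with n-k balls is matched by
   moving v -> u with k+1 balls, the move performed at time n-1-k. *)
lemma urn_state_balance:
  assumes "k + 2 \<le> n" "1 \<le> u" "u \<le> k" "u \<le> n - k" "1 \<le> v" "v \<le> k + 1" "v \<le> n - k - 1"
  shows "urn_num (n - k) u v * urn_state_weight n (k + 1) v
       = urn_num (k + 1) v u * urn_state_weight n k u"
proof -
  consider "v = u + 1" | "v = u" | "u = v + 1" | "v \<noteq> u + 1 \<and> v \<noteq> u \<and> u \<noteq> v + 1" by blast
  then show ?thesis
  proof cases
    case 1
    have hi: "2 * ((n - k - u) choose 2) * fact (n - k - u - 2) = fact (n - k - u)"
      using fact_choose_two[of "n - k - u"] assms 1 by simp
    have lo: "2 * ((u + 1) choose 2) * fact (u - 1) = fact (u + 1)"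
      using fact_choose_two[of "u + 1"] assms by simp
    have "2 * (urn_num (n - k) u v * urn_state_weight n (k + 1) v)
          = fact (n - k - u) * fact u * fact (u + 1) * fact (k - u)"
      using 1 unfolding urn_state_weight_def hi[symmetric]
      by (simp add: mult_ac diff_diff_add)
    also have "\<dots> = 2 * (urn_num (k + 1) v u * urn_state_weight n k u)"
      using 1 assms unfolding urn_state_weight_def lo[symmetric]
      by (simp add: mult_ac)
    finally show ?thesis by simp
  next
    case 2
    have hi: "fact (n - k - u) = (n - k - u) * fact (n - k - u - 1)"
      using assms 2 fact_reduce[where 'a=nat, of "n - k - u"] by simp
    have lo: "fact (Suc k - u) = (Suc k - u) * fact (k - u)"
      using assms fact_reduce[where 'a=nat, of "Suc k - u"] by simp
    show ?thesis
      using 2 assms unfolding urn_state_weight_def hi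
      by (simp add: lo mult_ac diff_diff_add)
  next
    case 3
    have hi: "2 * ((k + 2 - u) choose 2) * fact (k - u) = fact (k + 2 - u)"
      using fact_choose_two[of "k + 2 - u"] assms by simp
    have lo: "2 * (u choose 2) * fact (u - 2) = fact u"
      using fact_choose_two[of u] assms 3 by simp
    have "2 * (urn_num (n - k) u v * urn_state_weight n (k + 1) v)
          = fact u * fact (u - 1) * fact (k + 2 - u) * fact (n - k - u)"
      using 3 unfolding urn_state_weight_def lo[symmetric]
      by (simp add: mult_ac)
    also have "\<dots> = 2 * (urn_num (k + 1) v u * urn_state_weight n k u)"
      using 3 assms unfolding urn_state_weight_def hi[symmetric]
      by (simp add: mult_ac)
    finally show ?thesis by simp
  next
    case 4
    then show ?thesis by (simp add: urn_num_other)
  qed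
qed

(* States reachable at time k: U_0 = U_n = 0, and otherwise 1 <= U_k <= min k (n-k), since
   a red ball needs at least one step to appear and at least one black ball is left. *)
definition urn_support :: "nat \<Rightarrow> nat \<Rightarrow> nat \<Rightarrow> bool" where
  "urn_support n k u \<longleftrightarrow>
     (if k = 0 \<or> n \<le> k then u = 0 else 1 \<le> u \<and> u \<le> k \<and> u \<le> n - k)"

definition urn_weight :: "nat \<Rightarrow> nat \<Rightarrow> nat \<Rightarrow> real" where
  "urn_weight n k u =
     (if k = 0 \<or> n \<le> k then 1
      else real (urn_time_weight n k) / (real (urn_state_weight n k u) * fact (n - 1)))"

lemma urn_weight_pos: "urn_weight n k u > 0"
  unfolding urn_weight_def urn_time_weight_def urn_state_weight_def by simp

lemma urn_weight_boundary:
  assumes "2 \<le> n"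
  shows "urn_weight n 0 0 = 1" "urn_weight n n 0 = 1"
    and "urn_weight n 1 1 = 1" "urn_weight n (n - 1) 1 = 1"
  using assms unfolding urn_weight_def urn_time_weight_def urn_state_weight_def
  by (simp_all add: mult_ac)

(* Detailed balance between the forward chain at time k and the reversed chain, which at
   that position performs the forward transition of time n-1-k. *)
lemma urn_detailed_balance:
  assumes n: "2 \<le> n" and k: "k < n"
    and u: "urn_support n k u" and v: "urn_support n (Suc k) v"
  shows "urn_weight n k u * urn_trans n k u v
       = urn_weight n (Suc k) v * urn_trans n (n - 1 - k) v u"
proof -
  have first: "urn_trans n 0 0 1 = 1"
    using n by (simp add: urn_trans_middle)
  have last: "urn_trans n (n - 1) 1 0 = 1"
    by (simp add: urn_trans_last)
  consider "k = 0" | "k = n - 1" | "1 \<le> k" "k + 2 \<le> n" using k n by linarith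
  then show ?thesis
  proof cases
    case 1
    then have "u = 0" "v = 1" using u v n unfolding urn_support_def by auto
    then show ?thesis using 1 n first last urn_weight_boundary[OF n] by simp
  next
    case 2
    then have "u = 1" "v = 0" using u v n unfolding urn_support_def by (auto split: if_splits)
    then show ?thesis using 2 n first last urn_weight_boundary[OF n] by simp
  next
    case 3
    define t t' s s' where "t = urn_time_weight n k" "t' = urn_time_weight n (k + 1)"
      "s = urn_state_weight n k u" "s' = urn_state_weight n (k + 1) v"
    define N N' where "N = urn_num (n - k) u v" "N' = urn_num (k + 1) v u"
    define C C' where "C = (n - k) choose 2" "C' = (k + 1) choose 2"
    have pos: "s > 0" "s' > 0" "C > 0" "C' > 0"
      using 3 unfolding t_t'_s_s'_def C_C'_def urn_state_weight_def by auto
    have "(t * C') * (N * s') = (t' * C) * (N' * s)"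
      using urn_time_balance[OF 3] urn_state_balance[OF 3(2)] u v 3
      unfolding t_t'_s_s'_def N_N'_def C_C'_def urn_support_def by auto
    then have bal: "real t * real C' * (real N * real s') = real t' * real C * (real N' * real s)"
      by (metis of_nat_mult)
    have eqs: "urn_trans n k u v = real N / real C"
      "urn_trans n (n - 1 - k) v u = real N' / real C'"
      "urn_weight n k u = real t / (real s * fact (n - 1))"
      "urn_weight n (Suc k) v = real t' / (real s' * fact (n - 1))"
      using 3 unfolding N_N'_def C_C'_def t_t'_s_s'_def urn_weight_def
      by (simp_all add: urn_trans_middle)
    show ?thesis unfolding eqs using bal pos by (simp add: field_simps)
  qed
qed

lemma urn_support_step:
  assumes "k < n" "urn_support n k u" "urn_trans n k u v \<noteq> 0"
  shows "urn_support n (Suc k) v"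
  using assms unfolding urn_support_def urn_trans_def by (auto split: if_splits)

definition urn_prod :: "nat \<Rightarrow> (nat \<Rightarrow> nat) \<Rightarrow> real" where
  "urn_prod n a = (\<Prod>k<n. urn_trans n k (a k) (a (Suc k)))"

lemma urn_prod_cong: "(\<And>k. k \<le> n \<Longrightarrow> a k = b k) \<Longrightarrow> urn_prod n a = urn_prod n b"
  unfolding urn_prod_def by (rule prod.cong) auto

lemma urn_prod_reverse:
  "urn_prod n (\<lambda>k. a (n - k)) = (\<Prod>k<n. urn_trans n (n - 1 - k) (a (Suc k)) (a k))"
proof -
  have "(\<Prod>k<n. urn_trans n (n - 1 - k) (a (Suc k)) (a k))
     = (\<Prod>i<n. urn_trans n (n - 1 - (n - Suc i)) (a (Suc (n - Suc i))) (a (n - Suc i)))"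
    by (rule prod.nat_diff_reindex[symmetric])
  also have "\<dots> = urn_prod n (\<lambda>k. a (n - k))"
    unfolding urn_prod_def by (rule prod.cong) (auto simp: Suc_diff_Suc)
  finally show ?thesis by simp
qed

lemma urn_path_support:
  assumes start: "a 0 = 0" and pos: "urn_prod n a \<noteq> 0" and k: "k \<le> n"
  shows "urn_support n k (a k)"
  using k
proof (induction k)
  case 0
  then show ?case using start unfolding urn_support_def by simp
next
  case (Suc k)
  have "urn_trans n k (a k) (a (Suc k)) \<noteq> 0"
    using pos Suc.prems unfolding urn_prod_def by (auto simp: prod_zero_iff)
  then show ?case using urn_support_step Suc by simp
qed

lemma urn_reversal_from_start:
  assumes n: "2 \<le> n" and start: "a 0 = 0" and pos: "urn_prod n a \<noteq> 0"
  shows "a n = 0 \<and> urn_prod n (\<lambda>k. a (n - k)) = urn_prod n a"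
proof
  show "a n = 0"
    using urn_path_support[OF start pos, of n] unfolding urn_support_def by simp
  have "urn_prod n a = (\<Prod>k<n. urn_trans n (n - 1 - k) (a (Suc k)) (a k))"
    unfolding urn_prod_def
  proof (rule prod_detailed_balance[where h = "\<lambda>k. urn_weight n k (a k)"])
    show "urn_weight n k (a k) * urn_trans n k (a k) (a (Suc k))
        = urn_weight n (Suc k) (a (Suc k)) * urn_trans n (n - 1 - k) (a (Suc k)) (a k)"
      if "k < n" for k
      using urn_detailed_balance[OF n that] urn_path_support[OF start pos] that by simp
    show "urn_weight n n (a n) = urn_weight n 0 (a 0)"
      by (simp add: urn_weight_def)
    show "urn_weight n k (a k) \<noteq> 0" for k
      using urn_weight_pos[of n k "a k"] by simp
  qed
  then show "urn_prod n (\<lambda>k. a (n - k)) = urn_prod n a"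
    unfolding urn_prod_reverse ..
qed

lemma urn_prod_reversal:
  assumes n: "2 \<le> n"
  shows "(if a n = 0 then urn_prod n (\<lambda>k. a (n - k)) else 0) = (if a 0 = 0 then urn_prod n a else 0)"
proof -
  define b where "b = (\<lambda>k. a (n - k))"
  have twice: "urn_prod n (\<lambda>k. b (n - k)) = urn_prod n a"
    unfolding b_def by (rule urn_prod_cong) simp
  consider "a 0 = 0" "urn_prod n a \<noteq> 0" | "b 0 = 0" "urn_prod n b \<noteq> 0"
    | "a 0 \<noteq> 0 \<or> urn_prod n a = 0" "b 0 \<noteq> 0 \<or> urn_prod n b = 0" by blast
  then show ?thesis
  proof cases
    case 1
    then show ?thesis using urn_reversal_from_start[OF n 1] by simp
  next
    case 2
    then show ?thesis using urn_reversal_from_start[OF n 2] twice by (simp add: b_def)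
  next
    case 3
    then show ?thesis by (auto simp: b_def)
  qed
qed

theorem theorem7:
  fixes n :: nat
  assumes "n \<ge> 2"
  shows "\<forall>us. urn_path_prob n (rev us) = urn_path_prob n us"
proof
  fix us :: "nat list"
  show "urn_path_prob n (rev us) = urn_path_prob n us"
  proof (cases "length us = n + 1")
    case False
    then show ?thesis unfolding urn_path_prob_def by simp
  next
    case True
    have "urn_path_prob n (rev us) = (if us ! n = 0 then urn_prod n (\<lambda>k. us ! (n - k)) else 0)"
      unfolding urn_path_prob_def urn_prod_def using True
      by (auto simp: rev_nth intro!: prod.cong)
    also have "\<dots> = (if us ! 0 = 0 then urn_prod n (\<lambda>k. us ! k) else 0)"
      using urn_prod_reversal[OF assms, of "\<lambda>k. us ! k"] by simp
    also have "\<dots> = urn_path_prob n us"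
      unfolding urn_path_prob_def urn_prod_def using True by simp
    finally show ?thesis .
  qed
qed

end
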